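(* Define the $\mathbf{z}$-dependent $4N\times4N$ matrix $A(\mathbf{z}):=M\,\mathrm{adj}(\mathbb{I}_{2N}-U(\mathbf{z}))\,M^{*}$. Then: (1) its entries are polynomials in $\mathbf{z}$; (2) if $\mathbf{z}\in\Sigma^{\mathrm{sing}}(\Gamma)$, then $A(\mathbf{z})=0$; (3) if $\mathbf{z}\in\Sigma^{\mathrm{reg}}(\Gamma)$, then for any $\mathbf{x}\neq0$ with $(\mathbf{z},\mathbf{x})\in\mathcal{T}(\Gamma)$, $A(\mathbf{z})=c_{\mathbf{z},\mathbf{x}}\,\mathbf{x}\mathbf{x}^{*}$ for some $c_{\mathbf{z},\mathbf{x}}\in\mathbb{C}\setminus\{0\}$.
   Context: $\Gamma$ is a finite graph with $N$ edges with standard vertex conditions. $S$ is its real orthogonal $2N\times2N$ bond scattering matrix, $U(\mathbf{z})=\mathrm{diag}(\mathbf{z},\mathbf{z})S$, $J=\begin{pmatrix}0&\mathbb{I}_N\\ \mathbb{I}_N&0\end{pmatrix}$, $M=\begin{pmatrix}S+J\\ i(S-J)\end{pmatrix}$, $\mathbb{I}_m$ the $m\times m$ identity, and $\mathrm{adj}$ the adjugate matrix. $P_\Gamma(\mathbf{z})=\det(\mathbb{I}_{2N}-U(\mathbf{z}))$; the secular manifold is $\Sigma(\Gamma)=\{\mathbf{z}\in\mathbb{T}^N:P_\Gamma(\mathbf{z})=0\}$, with $\Sigma^{\mathrm{sing}}(\Gamma)$ the points where also $\nabla P_\Gamma=0$ and $\Sigma^{\mathrm{reg}}(\Gamma)$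 those where $\nabla P_\Gamma\neq0$. The trace space $\mathcal{T}(\Gamma)\subset\mathbb{T}^N\times\mathbb{C}^{4N}$ is the set of pairs $(\exp(ik\boldsymbol{\ell}),\mathrm{tr}_k(f))$ over eigenpairs $(k^2,f)$ of $(\Gamma,\boldsymbol{\ell})$, $\boldsymbol{\ell}\in\mathbb{R}_+^N$, where $\mathrm{tr}_k(f)=(\gamma_D(f),\tfrac1k\gamma_N(f))$ is the scale-invariant trace. *)

theory Defs
  imports "HOL-Analysis.Analysis" "Jordan_Normal_Form.Determinant"
          "Jordan_Normal_Form.Schur_Decomposition"
begin

text \<open>A finite graph with N edges 0..N-1; edge e runs from vertex orig e to vertex tgt e
  (multigraphs and loops allowed).  Directed bonds are 0..2N-1: bond b < N is edge b
  traversed from orig b to tgt b, bond N+e is edge e traversed backwards.\<close>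

definition bond_edge :: "nat \<Rightarrow> nat \<Rightarrow> nat" where
  "bond_edge N b = (if b < N then b else b - N)"

definition bond_start :: "(nat \<Rightarrow> 'v) \<Rightarrow> (nat \<Rightarrow> 'v) \<Rightarrow> nat \<Rightarrow> nat \<Rightarrow> 'v" where
  "bond_start orig tgt N b = (if b < N then orig b else tgt (b - N))"

definition bond_end :: "(nat \<Rightarrow> 'v) \<Rightarrow> (nat \<Rightarrow> 'v) \<Rightarrow> nat \<Rightarrow> nat \<Rightarrow> 'v" where
  "bond_end orig tgt N b = (if b < N then tgt b else orig (b - N))"

definition bond_rev :: "nat \<Rightarrow> nat \<Rightarrow> nat" where
  "bond_rev N b = (if b < N then b + N else b - N)"

text \<open>degree of a vertex = number of bonds starting there (a loop counts twice)\<close>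
definition vdeg :: "(nat \<Rightarrow> 'v) \<Rightarrow> (nat \<Rightarrow> 'v) \<Rightarrow> nat \<Rightarrow> 'v \<Rightarrow> nat" where
  "vdeg orig tgt N v = card {b. b < 2*N \<and> bond_start orig tgt N b = v}"

text \<open>Bond scattering matrix for standard (Neumann-Kirchhoff) vertex conditions:
  S(b,c) = 2/deg(v) - delta(b, reverse c) if c ends at the vertex v where b starts, else 0.\<close>
definition scat :: "(nat \<Rightarrow> 'v) \<Rightarrow> (nat \<Rightarrow> 'v) \<Rightarrow> nat \<Rightarrow> complex mat" where
  "scat orig tgt N = mat (2*N) (2*N) (\<lambda>(b,c).
     if bond_end orig tgt N c = bond_start orig tgt N b
     then complex_of_real (2 / real (vdeg orig tgt N (bond_start orig tgt N b))
                            - (if b = bond_rev N c then 1 else 0))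
     else 0)"

definition Jmat :: "nat \<Rightarrow> complex mat" where
  "Jmat N = mat (2*N) (2*N) (\<lambda>(b,c). if c = bond_rev N b then 1 else 0)"

definition Umat :: "(nat \<Rightarrow> 'v) \<Rightarrow> (nat \<Rightarrow> 'v) \<Rightarrow> nat \<Rightarrow> (nat \<Rightarrow> complex) \<Rightarrow> complex mat" where
  "Umat orig tgt N z = mat (2*N) (2*N) (\<lambda>(b,c). z (bond_edge N b) * scat orig tgt N $$ (b,c))"

definition secular_poly :: "(nat \<Rightarrow> 'v) \<Rightarrow> (nat \<Rightarrow> 'v) \<Rightarrow> nat \<Rightarrow> (nat \<Rightarrow> complex) \<Rightarrow> complex" where
  "secular_poly orig tgt N z = det (1\<^sub>m (2*N) - Umat orig tgt N z)"

definition Mmat :: "(nat \<Rightarrow> 'v) \<Rightarrow> (nat \<Rightarrow> 'v) \<Rightarrow> nat \<Rightarrow> complex mat" where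
  "Mmat orig tgt N = mat (4*N) (2*N) (\<lambda>(r,c).
     if r < 2*N then scat orig tgt N $$ (r,c) + Jmat N $$ (r,c)
     else \<i> * (scat orig tgt N $$ (r - 2*N, c) - Jmat N $$ (r - 2*N, c)))"

definition Amat :: "(nat \<Rightarrow> 'v) \<Rightarrow> (nat \<Rightarrow> 'v) \<Rightarrow> nat \<Rightarrow> (nat \<Rightarrow> complex) \<Rightarrow> complex mat" where
  "Amat orig tgt N z = Mmat orig tgt N * adj_mat (1\<^sub>m (2*N) - Umat orig tgt N z)
                         * mat_adjoint (Mmat orig tgt N)"

definition torus :: "nat \<Rightarrow> (nat \<Rightarrow> complex) set" where
  "torus N = {z. \<forall>e<N. norm (z e) = 1}"

definition pderiv_z :: "((nat \<Rightarrow> complex) \<Rightarrow> complex) \<Rightarrow> nat \<Rightarrow> (nat \<Rightarrow> complex) \<Rightarrow> complex" where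
  "pderiv_z P e z = deriv (\<lambda>w. P (z(e := w))) (z e)"

definition sigma_sing :: "(nat \<Rightarrow> 'v) \<Rightarrow> (nat \<Rightarrow> 'v) \<Rightarrow> nat \<Rightarrow> (nat \<Rightarrow> complex) set" where
  "sigma_sing orig tgt N = {z \<in> torus N. secular_poly orig tgt N z = 0 \<and>
      (\<forall>e<N. pderiv_z (secular_poly orig tgt N) e z = 0)}"

definition sigma_reg :: "(nat \<Rightarrow> 'v) \<Rightarrow> (nat \<Rightarrow> 'v) \<Rightarrow> nat \<Rightarrow> (nat \<Rightarrow> complex) set" where
  "sigma_reg orig tgt N = {z \<in> torus N. secular_poly orig tgt N z = 0 \<and>
      (\<exists>e<N. pderiv_z (secular_poly orig tgt N) e z \<noteq> 0)}"

definition poly_fun :: "nat \<Rightarrow> ((nat \<Rightarrow> complex) \<Rightarrow> complex) \<Rightarrow> bool" where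
  "poly_fun N g \<longleftrightarrow> (\<exists>(d::nat) (c :: (nat \<Rightarrow> nat) \<Rightarrow> complex). \<forall>z.
      g z = (\<Sum>\<alpha>\<in>{\<alpha>. (\<forall>i. \<alpha> i \<le> d) \<and> (\<forall>i\<ge>N. \<alpha> i = 0)}. c \<alpha> * (\<Prod>i<N. z i ^ \<alpha> i)))"

text \<open>Eigenfunction of the standard Laplacian on the metric graph with edge lengths l and
  eigenvalue k^2: f e is a function on [0, l e], df e its derivative.\<close>
definition bond_val :: "nat \<Rightarrow> (nat \<Rightarrow> real) \<Rightarrow> (nat \<Rightarrow> real \<Rightarrow> complex) \<Rightarrow> nat \<Rightarrow> complex" where
  "bond_val N l f b = (if b < N then f b 0 else f (b - N) (l (b - N)))"

text \<open>derivative at the start of bond b, in the direction into the edge (outgoing)\<close>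
definition bond_outder :: "nat \<Rightarrow> (nat \<Rightarrow> real) \<Rightarrow> (nat \<Rightarrow> real \<Rightarrow> complex) \<Rightarrow> nat \<Rightarrow> complex" where
  "bond_outder N l df b = (if b < N then df b 0 else - df (b - N) (l (b - N)))"

definition is_eigenpair :: "(nat \<Rightarrow> 'v) \<Rightarrow> (nat \<Rightarrow> 'v) \<Rightarrow> nat \<Rightarrow> (nat \<Rightarrow> real) \<Rightarrow> real
    \<Rightarrow> (nat \<Rightarrow> real \<Rightarrow> complex) \<Rightarrow> (nat \<Rightarrow> real \<Rightarrow> complex) \<Rightarrow> bool" where
  "is_eigenpair orig tgt N l k f df \<longleftrightarrow>
     (\<forall>e<N. \<forall>x\<in>{0..l e}.
        (f e has_vector_derivative df e x) (at x within {0..l e}) \<and>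
        (df e has_vector_derivative (- complex_of_real (k^2) * f e x)) (at x within {0..l e})) \<and>
     (\<forall>b<2*N. \<forall>c<2*N. bond_start orig tgt N b = bond_start orig tgt N c \<longrightarrow>
        bond_val N l f b = bond_val N l f c) \<and>
     (\<forall>v. (\<Sum>b\<in>{b. b < 2*N \<and> bond_start orig tgt N b = v}. bond_outder N l df b) = 0) \<and>
     (\<exists>e<N. \<exists>x\<in>{0..l e}. f e x \<noteq> 0)"

text \<open>scale-invariant trace (gamma_D f, gamma_N f / k) as a vector in C^(4N)\<close>
definition trace_vec :: "nat \<Rightarrow> (nat \<Rightarrow> real) \<Rightarrow> real
    \<Rightarrow> (nat \<Rightarrow> real \<Rightarrow> complex) \<Rightarrow> (nat \<Rightarrow> real \<Rightarrow> complex) \<Rightarrow> complex vec" where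
  "trace_vec N l k f df = vec (4*N) (\<lambda>r. if r < 2*N then bond_val N l f r
                                      else bond_outder N l df (r - 2*N) / complex_of_real k)"

definition trace_space :: "(nat \<Rightarrow> 'v) \<Rightarrow> (nat \<Rightarrow> 'v) \<Rightarrow> nat \<Rightarrow> ((nat \<Rightarrow> complex) \<times> complex vec) set" where
  "trace_space orig tgt N = {(z, x). \<exists>l k f df.
      (\<forall>e<N. l e > 0) \<and> k > 0 \<and> is_eigenpair orig tgt N l k f df \<and>
      (\<forall>e<N. z e = exp (\<i> * complex_of_real (k * l e))) \<and>
      x = trace_vec N l k f df}"

end

theory Submission
  imports Defs
begin

text \<open>
  On the torus \<open>U(z)\<close> is unitary, so \<open>I - U(z)\<close> and its adjoint have the same kernel.
  For a singular matrix with this property the adjugate vanishes if the kernel has dimension at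
  least two, and equals \<open>\<gamma> q q\<^sup>*\<close> if the kernel is spanned by \<open>q\<close>.  Jacobi's formula
  expresses \<open>\<partial>P/\<partial>z\<^sub>e\<close> through the adjugate; in the rank-one case
  \<open>z\<^sub>e \<partial>P/\<partial>z\<^sub>e\<close> is \<open>-\<gamma>\<close> times the mass of \<open>q\<close> on the two bonds of \<open>e\<close>, so the
  gradient of \<open>P\<close> vanishes exactly when the adjugate does.  The plane-wave amplitudes of an
  eigenfunction form a kernel vector \<open>w\<close> of \<open>I - U(z)\<close> with \<open>M w\<close> equal to its trace \<open>x\<close>,
  whence \<open>A(z) = \<gamma> (M w)(M w)\<^sup>* = \<gamma> x x\<^sup>*\<close>.  Polynomiality is clear, adjugate entries
  being minors.
\<close>

section \<open>Polynomial functions\<close>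

definition bounded_exponents :: "nat \<Rightarrow> nat \<Rightarrow> (nat \<Rightarrow> nat) set" where
  "bounded_exponents N d = {\<alpha>. (\<forall>i. \<alpha> i \<le> d) \<and> (\<forall>i\<ge>N. \<alpha> i = 0)}"

lemma finite_bounded_exponents: "finite (bounded_exponents N d)"
proof -
  have "bounded_exponents N d \<subseteq> (\<lambda>f i. if i < N then f i else 0) ` ({0..<N} \<rightarrow>\<^sub>E {0..d})"
  proof
    fix \<alpha> assume "\<alpha> \<in> bounded_exponents N d"
    then have "\<alpha> = (\<lambda>i. if i < N then restrict \<alpha> {0..<N} i else 0)"
      and "restrict \<alpha> {0..<N} \<in> {0..<N} \<rightarrow>\<^sub>E {0..d}"
      by (auto simp: bounded_exponents_def)
    then show "\<alpha> \<in> (\<lambda>f i. if i < N then f i else 0) ` ({0..<N} \<rightarrow>\<^sub>E {0..d})"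
      by blast
  qed
  then show ?thesis
    by (rule finite_subset) (intro finite_imageI finite_PiE; simp)
qed

lemma poly_fun_iff:
  "poly_fun N g \<longleftrightarrow>
     (\<exists>d c. \<forall>z. g z = (\<Sum>\<alpha>\<in>bounded_exponents N d. c \<alpha> * (\<Prod>i<N. z i ^ \<alpha> i)))"
  unfolding poly_fun_def bounded_exponents_def ..

lemma poly_fun_finite_sum:
  fixes I :: "'i set" and \<alpha> :: "'i \<Rightarrow> nat \<Rightarrow> nat"
  assumes fin: "finite I" and supp: "\<And>i j. i \<in> I \<Longrightarrow> N \<le> j \<Longrightarrow> \<alpha> i j = 0"
    and g: "\<And>z. g z = (\<Sum>i\<in>I. c i * (\<Prod>j<N. z j ^ \<alpha> i j))"
  shows "poly_fun N g"
proof -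
  define d where "d = (\<Sum>i\<in>I. \<Sum>j<N. \<alpha> i j)"
  have \<alpha>_bounded: "\<alpha> i \<in> bounded_exponents N d" if "i \<in> I" for i
  proof -
    have "\<alpha> i j \<le> d" if "j < N" for j
    proof -
      have "\<alpha> i j \<le> (\<Sum>j<N. \<alpha> i j)" by (rule member_le_sum) (use that in auto)
      also have "\<dots> \<le> d" unfolding d_def by (rule member_le_sum) (use \<open>i \<in> I\<close> fin in auto)
      finally show ?thesis .
    qed
    moreover have "\<alpha> i j = 0" if "N \<le> j" for j using supp \<open>i \<in> I\<close> that by blast
    ultimately have "\<alpha> i j \<le> d" for j by (cases "j < N") auto
    with \<open>\<And>j. N \<le> j \<Longrightarrow> \<alpha> i j = 0\<close> show ?thesis by (simp add: bounded_exponents_def)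
  qed
  define C where "C \<beta> = (\<Sum>i\<in>{i\<in>I. \<alpha> i = \<beta>}. c i)" for \<beta>
  have "g z = (\<Sum>\<beta>\<in>bounded_exponents N d. C \<beta> * (\<Prod>j<N. z j ^ \<beta> j))" for z
  proof -
    have "(\<Sum>\<beta>\<in>bounded_exponents N d. C \<beta> * (\<Prod>j<N. z j ^ \<beta> j))
        = (\<Sum>\<beta>\<in>bounded_exponents N d. \<Sum>i\<in>{i\<in>I. \<alpha> i = \<beta>}. c i * (\<Prod>j<N. z j ^ \<alpha> i j))"
      unfolding C_def sum_distrib_right by (intro sum.cong) auto
    also have "\<dots> = (\<Sum>i\<in>I. c i * (\<Prod>j<N. z j ^ \<alpha> i j))"
      by (rule sum.group) (use fin finite_bounded_exponents \<alpha>_bounded in auto)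
    finally show ?thesis using g by simp
  qed
  then show ?thesis unfolding poly_fun_iff by blast
qed

lemma poly_fun_const: "poly_fun N (\<lambda>z. a)"
  by (rule poly_fun_finite_sum[of "{()}" _ "\<lambda>_ _. 0" _ "\<lambda>_. a"]) auto

lemma poly_fun_var:
  assumes "e < N"
  shows "poly_fun N (\<lambda>z. z e)"
proof (rule poly_fun_finite_sum[of "{()}" _ "\<lambda>_ j. if j = e then 1 else 0" _ "\<lambda>_. 1"])
  fix z :: "nat \<Rightarrow> complex"
  have "(\<Prod>j<N. z j ^ (if j = e then 1 else 0)) = (\<Prod>j<N. if j = e then z j else 1)"
    by (intro prod.cong) auto
  also have "\<dots> = z e" using assms by (subst prod.delta) auto
  finally show "z e = (\<Sum>i\<in>{()}. 1 * (\<Prod>j<N. z j ^ (if j = e then 1 else 0)))" by simp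
qed (use assms in auto)

lemma poly_fun_add:
  assumes "poly_fun N f" "poly_fun N g"
  shows "poly_fun N (\<lambda>z. f z + g z)"
proof -
  obtain d1 c1 where f: "\<And>z. f z = (\<Sum>\<alpha>\<in>bounded_exponents N d1. c1 \<alpha> * (\<Prod>j<N. z j ^ \<alpha> j))"
    using assms(1) unfolding poly_fun_iff by blast
  obtain d2 c2 where g: "\<And>z. g z = (\<Sum>\<alpha>\<in>bounded_exponents N d2. c2 \<alpha> * (\<Prod>j<N. z j ^ \<alpha> j))"
    using assms(2) unfolding poly_fun_iff by blast
  show ?thesis
  proof (rule poly_fun_finite_sum[of "bounded_exponents N d1 <+> bounded_exponents N d2" _
        "case_sum id id" _ "case_sum c1 c2"])
    show "finite (bounded_exponents N d1 <+> bounded_exponents N d2)"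
      by (simp add: finite_bounded_exponents)
    show "f z + g z = (\<Sum>i\<in>bounded_exponents N d1 <+> bounded_exponents N d2.
        case_sum c1 c2 i * (\<Prod>j<N. z j ^ case_sum id id i j))" for z
      by (simp add: sum.Plus finite_bounded_exponents f g comp_def)
  qed (auto simp: bounded_exponents_def)
qed

lemma poly_fun_mult:
  assumes "poly_fun N f" "poly_fun N g"
  shows "poly_fun N (\<lambda>z. f z * g z)"
proof -
  obtain d1 c1 where f: "\<And>z. f z = (\<Sum>\<alpha>\<in>bounded_exponents N d1. c1 \<alpha> * (\<Prod>j<N. z j ^ \<alpha> j))"
    using assms(1) unfolding poly_fun_iff by blast
  obtain d2 c2 where g: "\<And>z. g z = (\<Sum>\<alpha>\<in>bounded_exponents N d2. c2 \<alpha> * (\<Prod>j<N. z j ^ \<alpha> j))"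
    using assms(2) unfolding poly_fun_iff by blast
  let ?I = "bounded_exponents N d1 \<times> bounded_exponents N d2"
  show ?thesis
  proof (rule poly_fun_finite_sum[of ?I _ "\<lambda>(\<alpha>,\<beta>) j. \<alpha> j + \<beta> j" _ "\<lambda>(\<alpha>,\<beta>). c1 \<alpha> * c2 \<beta>"])
    fix z
    have "f z * g z = (\<Sum>(\<alpha>,\<beta>)\<in>?I. (c1 \<alpha> * (\<Prod>j<N. z j ^ \<alpha> j)) * (c2 \<beta> * (\<Prod>j<N. z j ^ \<beta> j)))"
      unfolding f g sum_product sum.cartesian_product ..
    then show "f z * g z = (\<Sum>i\<in>?I. (\<lambda>(\<alpha>,\<beta>). c1 \<alpha> * c2 \<beta>) i *
        (\<Prod>j<N. z j ^ (\<lambda>(\<alpha>,\<beta>) j. \<alpha> j + \<beta> j) i j))"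
      by (simp add: case_prod_beta power_add prod.distrib mult_ac)
  qed (auto simp: finite_bounded_exponents, auto simp: bounded_exponents_def)
qed

lemma poly_fun_diff:
  assumes "poly_fun N f" "poly_fun N g"
  shows "poly_fun N (\<lambda>z. f z - g z)"
  using poly_fun_add[OF assms(1) poly_fun_mult[OF poly_fun_const assms(2)], of "-1"] by simp

lemma poly_fun_sum:
  assumes "finite A" "\<And>a. a \<in> A \<Longrightarrow> poly_fun N (f a)"
  shows "poly_fun N (\<lambda>z. \<Sum>a\<in>A. f a z)"
  using assms by (induction A rule: finite_induct) (auto intro: poly_fun_add poly_fun_const)

lemma poly_fun_prod:
  assumes "finite A" "\<And>a. a \<in> A \<Longrightarrow> poly_fun N (f a)"
  shows "poly_fun N (\<lambda>z. \<Prod>a\<in>A. f a z)"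
  using assms by (induction A rule: finite_induct) (auto intro: poly_fun_mult poly_fun_const)

definition poly_mat :: "nat \<Rightarrow> nat \<Rightarrow> nat \<Rightarrow> ((nat \<Rightarrow> complex) \<Rightarrow> complex mat) \<Rightarrow> bool" where
  "poly_mat N n m A \<longleftrightarrow>
     (\<forall>z. A z \<in> carrier_mat n m) \<and> (\<forall>i<n. \<forall>j<m. poly_fun N (\<lambda>z. A z $$ (i,j)))"

lemma poly_matI:
  "(\<And>z. A z \<in> carrier_mat n m) \<Longrightarrow> (\<And>i j. i < n \<Longrightarrow> j < m \<Longrightarrow> poly_fun N (\<lambda>z. A z $$ (i,j)))
    \<Longrightarrow> poly_mat N n m A"
  by (simp add: poly_mat_def)

lemma poly_matD:
  assumes "poly_mat N n m A"
  shows "A z \<in> carrier_mat n m" "i < n \<Longrightarrow> j < m \<Longrightarrow> poly_fun N (\<lambda>z. A z $$ (i,j))"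
  using assms by (auto simp: poly_mat_def)

lemma poly_mat_const: "M \<in> carrier_mat n m \<Longrightarrow> poly_mat N n m (\<lambda>z. M)"
  by (simp add: poly_mat_def poly_fun_const)

lemma poly_mat_diff:
  assumes A: "poly_mat N n m A" and B: "poly_mat N n m B"
  shows "poly_mat N n m (\<lambda>z. A z - B z)"
proof (rule poly_matI)
  show "A z - B z \<in> carrier_mat n m" for z
    using poly_matD(1)[OF A, of z] poly_matD(1)[OF B, of z] by auto
  fix i j assume ij: "i < n" "j < m"
  have "(A z - B z) $$ (i,j) = A z $$ (i,j) - B z $$ (i,j)" for z
    using poly_matD(1)[OF A, of z] poly_matD(1)[OF B, of z] ij by auto
  then show "poly_fun N (\<lambda>z. (A z - B z) $$ (i,j))"
    using poly_fun_diff[OF poly_matD(2)[OF A ij] poly_matD(2)[OF B ij]] by simp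
qed

lemma poly_mat_mult:
  assumes A: "poly_mat N n m A" and B: "poly_mat N m p B"
  shows "poly_mat N n p (\<lambda>z. A z * B z)"
proof (rule poly_matI)
  show "A z * B z \<in> carrier_mat n p" for z
    using poly_matD(1)[OF A, of z] poly_matD(1)[OF B, of z] by auto
  fix i j assume ij: "i < n" "j < p"
  have "(A z * B z) $$ (i,j) = (\<Sum>k\<in>{0..<m}. A z $$ (i,k) * B z $$ (k,j))" for z
    using poly_matD(1)[OF A, of z] poly_matD(1)[OF B, of z] ij by (auto simp: scalar_prod_def)
  moreover have "poly_fun N (\<lambda>z. \<Sum>k\<in>{0..<m}. A z $$ (i,k) * B z $$ (k,j))"
    using ij by (intro poly_fun_sum poly_fun_mult poly_matD(2)[OF A] poly_matD(2)[OF B]) auto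
  ultimately show "poly_fun N (\<lambda>z. (A z * B z) $$ (i,j))" by simp
qed

lemma poly_fun_det:
  assumes A: "poly_mat N n n A"
  shows "poly_fun N (\<lambda>z. det (A z))"
proof -
  have "det (A z) = (\<Sum>p\<in>{p. p permutes {0..<n}}. signof p * (\<Prod>i = 0..<n. A z $$ (i, p i)))" for z
    using det_def'[OF poly_matD(1)[OF A]] .
  moreover have "poly_fun N (\<lambda>z. \<Sum>p\<in>{p. p permutes {0..<n}}. signof p * (\<Prod>i = 0..<n. A z $$ (i, p i)))"
    by (intro poly_fun_sum poly_fun_mult poly_fun_const poly_fun_prod finite_permutations
        poly_matD(2)[OF A]) (auto simp: permutes_in_image)
  ultimately show ?thesis by simp
qed

lemma poly_mat_adj_mat:
  assumes A: "poly_mat N n n A"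
  shows "poly_mat N n n (\<lambda>z. adj_mat (A z))"
proof (rule poly_matI)
  show "adj_mat (A z) \<in> carrier_mat n n" for z
    using adj_mat(1)[OF poly_matD(1)[OF A]] .
  fix i j assume ij: "i < n" "j < n"
  have "poly_mat N (n - 1) (n - 1) (\<lambda>z. mat_delete (A z) j i)"
  proof (rule poly_matI)
    show "mat_delete (A z) j i \<in> carrier_mat (n - 1) (n - 1)" for z
      using poly_matD(1)[OF A, of z] by (simp add: mat_delete_def)
    fix a b assume ab: "a < n - 1" "b < n - 1"
    let ?a = "if a < j then a else Suc a" and ?b = "if b < i then b else Suc b"
    have "mat_delete (A z) j i $$ (a, b) = A z $$ (?a, ?b)" for z
      using poly_matD(1)[OF A, of z] ab by (simp add: mat_delete_def)
    moreover have "poly_fun N (\<lambda>z. A z $$ (?a, ?b))"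
      using ab by (intro poly_matD(2)[OF A]) auto
    ultimately show "poly_fun N (\<lambda>z. mat_delete (A z) j i $$ (a, b))" by simp
  qed
  moreover have "adj_mat (A z) $$ (i,j) = (- 1) ^ (j + i) * det (mat_delete (A z) j i)" for z
    using poly_matD(1)[OF A, of z] ij by (simp add: adj_mat_def cofactor_def)
  ultimately show "poly_fun N (\<lambda>z. adj_mat (A z) $$ (i,j))"
    using poly_fun_mult[OF poly_fun_const poly_fun_det] by simp
qed

section \<open>Adjugates of singular matrices\<close>

lemma adj_mat_index_replace_col:
  fixes A :: "'a::comm_ring_1 mat"
  assumes A: "A \<in> carrier_mat n n" and j: "j < n" and k: "k < n"
  shows "adj_mat A $$ (k, j) = det (replace_col A (unit_vec n j) k)"
proof -
  let ?R = "replace_col A (unit_vec n j) k"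
  have R: "?R \<in> carrier_mat n n" using A by (simp add: replace_col_def)
  have "mat_delete ?R j k = mat_delete A j k"
    using A by (intro eq_matI) (auto simp: mat_delete_def replace_col_def)
  then have "cofactor ?R j k = cofactor A j k" by (simp add: cofactor_def)
  have "det ?R = (\<Sum>i<n. ?R $$ (i,k) * cofactor ?R i k)"
    by (rule laplace_expansion_column[OF R k])
  also have "\<dots> = (\<Sum>i<n. if i = j then cofactor ?R i k else 0)"
    using A j k by (intro sum.cong) (auto simp: replace_col_def)
  also have "\<dots> = cofactor A j k"
    using j \<open>cofactor ?R j k = cofactor A j k\<close> by simp
  finally show ?thesis using A j k by (simp add: adj_mat_def)
qed

lemma kernel_vector_vanishing_at:
  fixes B :: "'a::field mat"
  assumes B: "B \<in> carrier_mat n n"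
    and q: "q \<in> carrier_vec n" "q \<noteq> 0\<^sub>v n" "B *\<^sub>v q = 0\<^sub>v n"
    and v: "v \<in> carrier_vec n" "B *\<^sub>v v = 0\<^sub>v n" "\<forall>t. v \<noteq> t \<cdot>\<^sub>v q"
    and k: "k < n"
  obtains w :: "'a vec" where "w \<in> carrier_vec n" "w \<noteq> 0\<^sub>v n" "B *\<^sub>v w = 0\<^sub>v n" "w $ k = 0"
proof (cases "q $ k = 0")
  case True
  then show ?thesis using q that by blast
next
  case False
  define w where "w = q $ k \<cdot>\<^sub>v v - v $ k \<cdot>\<^sub>v q"
  have "B *\<^sub>v w = q $ k \<cdot>\<^sub>v (B *\<^sub>v v) - v $ k \<cdot>\<^sub>v (B *\<^sub>v q)"
    unfolding w_def using B q v by (simp add: mult_minus_distrib_mat_vec mult_mat_vec)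
  then have "B *\<^sub>v w = 0\<^sub>v n" using q v by auto
  moreover have "w \<noteq> 0\<^sub>v n"
  proof
    assume "w = 0\<^sub>v n"
    then have "v = (v $ k / q $ k) \<cdot>\<^sub>v q"
      using q v False by (intro eq_vecI) (auto simp: w_def field_simps dest!: vec_eq_iff[THEN iffD1])
    with v show False by blast
  qed
  moreover have "w \<in> carrier_vec n" "w $ k = 0"
    using q v k by (auto simp: w_def)
  ultimately show ?thesis using that by blast
qed

lemma adj_mat_eq_0_if_independent_kernel_vectors:
  fixes B :: "'a::field mat"
  assumes B: "B \<in> carrier_mat n n"
    and q: "q \<in> carrier_vec n" "q \<noteq> 0\<^sub>v n" "B *\<^sub>v q = 0\<^sub>v n"
    and v: "v \<in> carrier_vec n" "B *\<^sub>v v = 0\<^sub>v n" "\<forall>t. v \<noteq> t \<cdot>\<^sub>v q"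
  shows "adj_mat B = 0\<^sub>m n n"
proof (rule eq_matI)
  fix k j assume "k < dim_row (0\<^sub>m n n :: 'a mat)" "j < dim_col (0\<^sub>m n n :: 'a mat)"
  then have k: "k < n" and j: "j < n" by auto
  obtain w where w: "w \<in> carrier_vec n" "w \<noteq> 0\<^sub>v n" "B *\<^sub>v w = 0\<^sub>v n" "w $ k = 0"
    using kernel_vector_vanishing_at[OF B q v k] .
  let ?R = "replace_col B (unit_vec n j) k"
  have R: "?R \<in> carrier_mat n n" using B by (simp add: replace_col_def)
  \<comment> \<open>the column replaced by a unit vector is multiplied by the vanishing entry of w\<close>
  have "?R *\<^sub>v w = B *\<^sub>v w"
    using B w(1,4) by (intro eq_vecI) (auto simp: replace_col_def scalar_prod_def intro!: sum.cong)
  then have "det ?R = 0"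
    using det_0_iff_vec_prod_zero[OF R] w by auto
  then show "adj_mat B $$ (k, j) = 0\<^sub>m n n $$ (k, j)"
    using adj_mat_index_replace_col[OF B j k] k j by simp
qed (use adj_mat(1)[OF B] in auto)

definition outer_mat :: "complex vec \<Rightarrow> complex mat" where
  "outer_mat x = mat (dim_vec x) (dim_vec x) (\<lambda>(i,j). x $ i * cnj (x $ j))"

lemma outer_mat_carrier: "x \<in> carrier_vec n \<Longrightarrow> outer_mat x \<in> carrier_mat n n"
  by (simp add: outer_mat_def)

lemma mat_adjoint_carrier: "A \<in> carrier_mat n m \<Longrightarrow> mat_adjoint A \<in> carrier_mat m n"
  by (simp add: mat_adjoint_def mat_of_rows_def)

lemma index_mat_adjoint:
  "(A :: complex mat) \<in> carrier_mat n m \<Longrightarrow> i < m \<Longrightarrow> j < n \<Longrightarrow> mat_adjoint A $$ (i,j) = cnj (A $$ (j,i))"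
  by (simp add: mat_adjoint_def mat_of_rows_def)

lemma mat_adjoint_mult_conjugate_row:
  fixes X B :: "complex mat"
  assumes X: "X \<in> carrier_mat m n" and B: "B \<in> carrier_mat n p" and i: "i < m"
  shows "mat_adjoint B *\<^sub>v conjugate (row X i) = conjugate (row (X * B) i)"
proof (rule eq_vecI)
  fix k assume "k < dim_vec (conjugate (row (X * B) i))"
  then have k: "k < p" using B by simp
  have "(mat_adjoint B *\<^sub>v conjugate (row X i)) $ k = (\<Sum>l<n. cnj (B $$ (l,k)) * cnj (X $$ (i,l)))"
    using B X k i mat_adjoint_carrier[OF B]
    by (auto simp: index_mat_adjoint scalar_prod_def intro!: sum.cong)
  also have "\<dots> = cnj ((X * B) $$ (i,k))"
    using B X k i by (simp add: scalar_prod_def cnj_sum mult.commute lessThan_atLeast0)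
  finally show "(mat_adjoint B *\<^sub>v conjugate (row X i)) $ k = conjugate (row (X * B) i) $ k"
    using B X k i by simp
qed (use X B mat_adjoint_carrier[OF B] in auto)

lemma outer_mat_if_parallel_cols_rows:
  fixes X :: "complex mat"
  assumes X: "X \<in> carrier_mat n n" and q: "q \<in> carrier_vec n" "q \<noteq> 0\<^sub>v n"
    and cols: "\<And>j. j < n \<Longrightarrow> \<exists>c. col X j = c \<cdot>\<^sub>v q"
    and rows: "\<And>i. i < n \<Longrightarrow> \<exists>d. conjugate (row X i) = d \<cdot>\<^sub>v q"
  obtains \<gamma> where "X = \<gamma> \<cdot>\<^sub>m outer_mat q"
proof -
  obtain c where c: "\<And>j. j < n \<Longrightarrow> col X j = c j \<cdot>\<^sub>v q" using cols by metis
  obtain d where d: "\<And>i. i < n \<Longrightarrow> conjugate (row X i) = d i \<cdot>\<^sub>v q" using rows by metis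
  have Xc: "X $$ (i,j) = c j * q $ i" if "i < n" "j < n" for i j
    using arg_cong[OF c[OF that(2)], of "\<lambda>v. v $ i"] that q X by simp
  have Xd: "cnj (X $$ (i,j)) = d i * q $ j" if "i < n" "j < n" for i j
    using arg_cong[OF d[OF that(1)], of "\<lambda>v. v $ j"] that q X by simp
  obtain k where k: "k < n" "q $ k \<noteq> 0"
    using q by (metis carrier_vecD eq_vecI index_zero_vec)
  have "X = (cnj (d k) / q $ k) \<cdot>\<^sub>m outer_mat q"
  proof (rule eq_matI)
    fix i j assume "i < dim_row ((cnj (d k) / q $ k) \<cdot>\<^sub>m outer_mat q)"
      "j < dim_col ((cnj (d k) / q $ k) \<cdot>\<^sub>m outer_mat q)"
    then have ij: "i < n" "j < n" using q by (auto simp: outer_mat_def)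
    have "c j * q $ k = cnj (d k) * cnj (q $ j)"
      using Xc[OF k(1) ij(2)] Xd[OF k(1) ij(2)] by (metis complex_cnj_cnj complex_cnj_mult)
    then have "c j = cnj (d k) * cnj (q $ j) / q $ k" using k(2) by (simp add: field_simps)
    moreover have "((cnj (d k) / q $ k) \<cdot>\<^sub>m outer_mat q) $$ (i,j) = cnj (d k) / q $ k * (q $ i * cnj (q $ j))"
      using q ij by (simp add: outer_mat_def)
    ultimately show "X $$ (i,j) = ((cnj (d k) / q $ k) \<cdot>\<^sub>m outer_mat q) $$ (i,j)"
      using Xc[OF ij] by simp
  qed (use X q in \<open>auto simp: outer_mat_def\<close>)
  then show ?thesis using that by blast
qed

lemma adj_mat_rank_one:
  fixes B :: "complex mat"
  assumes B: "B \<in> carrier_mat n n" "det B = 0"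
    and q: "q \<in> carrier_vec n" "q \<noteq> 0\<^sub>v n"
    and span: "\<And>v. v \<in> carrier_vec n \<Longrightarrow> B *\<^sub>v v = 0\<^sub>v n \<Longrightarrow> \<exists>t. v = t \<cdot>\<^sub>v q"
    and adjoint_kernel: "\<And>v. v \<in> carrier_vec n \<Longrightarrow> mat_adjoint B *\<^sub>v v = 0\<^sub>v n \<Longrightarrow> B *\<^sub>v v = 0\<^sub>v n"
  obtains \<gamma> where "adj_mat B = \<gamma> \<cdot>\<^sub>m outer_mat q"
proof (rule outer_mat_if_parallel_cols_rows[OF adj_mat(1)[OF B(1)] q])
  have BX: "B * adj_mat B = 0\<^sub>m n n" and XB: "adj_mat B * B = 0\<^sub>m n n"
    using adj_mat(2,3)[OF B(1)] B(2) by (auto intro!: eq_matI)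
  show "\<exists>c. col (adj_mat B) j = c \<cdot>\<^sub>v q" if j: "j < n" for j
    using span[of "col (adj_mat B) j"] col_mult2[OF B(1) adj_mat(1)[OF B(1)] j] adj_mat(1)[OF B(1)] BX j
    by simp
  show "\<exists>d. conjugate (row (adj_mat B) i) = d \<cdot>\<^sub>v q" if i: "i < n" for i
    using mat_adjoint_mult_conjugate_row[OF adj_mat(1)[OF B(1)] B(1) i] adjoint_kernel span
      adj_mat(1)[OF B(1)] XB i
    by simp
qed (rule that)

lemma adj_mat_zero_or_rank_one:
  fixes B :: "complex mat"
  assumes B: "B \<in> carrier_mat n n" "det B = 0"
    and adjoint_kernel: "\<And>v. v \<in> carrier_vec n \<Longrightarrow> mat_adjoint B *\<^sub>v v = 0\<^sub>v n \<Longrightarrow> B *\<^sub>v v = 0\<^sub>v n"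
    and q: "q \<in> carrier_vec n" "q \<noteq> 0\<^sub>v n" "B *\<^sub>v q = 0\<^sub>v n"
  shows "adj_mat B = 0\<^sub>m n n \<or> (\<exists>\<gamma>. \<gamma> \<noteq> 0 \<and> adj_mat B = \<gamma> \<cdot>\<^sub>m outer_mat q)"
proof (cases "\<exists>v\<in>carrier_vec n. B *\<^sub>v v = 0\<^sub>v n \<and> (\<forall>t. v \<noteq> t \<cdot>\<^sub>v q)")
  case True
  then show ?thesis using adj_mat_eq_0_if_independent_kernel_vectors[OF B(1) q] by blast
next
  case False
  then obtain \<gamma> where \<gamma>: "adj_mat B = \<gamma> \<cdot>\<^sub>m outer_mat q"
    using adj_mat_rank_one[OF B q(1,2) _ adjoint_kernel] by blast
  have "0 \<cdot>\<^sub>m outer_mat q = 0\<^sub>m n n"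
    using q by (auto simp: outer_mat_def)
  then show ?thesis using \<gamma> by (cases "\<gamma> = 0") auto
qed

lemma mult_outer_mat_mult_adjoint:
  assumes M: "M \<in> carrier_mat m n" and q: "q \<in> carrier_vec n"
  shows "M * outer_mat q * mat_adjoint M = outer_mat (M *\<^sub>v q)"
proof (rule eq_matI)
  fix i j assume "i < dim_row (outer_mat (M *\<^sub>v q))" "j < dim_col (outer_mat (M *\<^sub>v q))"
  then have ij: "i < m" "j < m" using M by (auto simp: outer_mat_def)
  have "(M * outer_mat q * mat_adjoint M) $$ (i,j)
      = (\<Sum>b<n. (\<Sum>a<n. M $$ (i,a) * (q $ a * cnj (q $ b))) * cnj (M $$ (j,b)))"
    using M q ij mat_adjoint_carrier[OF M]
    by (auto simp: scalar_prod_def outer_mat_def index_mat_adjoint lessThan_atLeast0 intro!: sum.cong)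
  also have "\<dots> = (\<Sum>a<n. M $$ (i,a) * q $ a) * cnj (\<Sum>b<n. M $$ (j,b) * q $ b)"
    by (simp add: sum_distrib_left sum_distrib_right cnj_sum mult_ac)
  also have "\<dots> = outer_mat (M *\<^sub>v q) $$ (i,j)"
    using M q ij by (simp add: outer_mat_def scalar_prod_def lessThan_atLeast0)
  finally show "(M * outer_mat q * mat_adjoint M) $$ (i,j) = outer_mat (M *\<^sub>v q) $$ (i,j)" .
qed (use M q mat_adjoint_carrier[OF M] in \<open>auto simp: outer_mat_def\<close>)

lemma kernel_adjoint_one_minus_unitary:
  fixes U :: "complex mat"
  assumes U: "U \<in> carrier_mat n n" "U * mat_adjoint U = 1\<^sub>m n"
    and v: "v \<in> carrier_vec n" "mat_adjoint (1\<^sub>m n - U) *\<^sub>v v = 0\<^sub>v n"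
  shows "(1\<^sub>m n - U) *\<^sub>v v = 0\<^sub>v n"
proof -
  have U': "mat_adjoint U \<in> carrier_mat n n" using mat_adjoint_carrier[OF U(1)] .
  have D: "1\<^sub>m n - U \<in> carrier_mat n n" using minus_carrier_mat[OF U(1)] .
  have "mat_adjoint (1\<^sub>m n - U) = 1\<^sub>m n - mat_adjoint U"
    using U(1) U' mat_adjoint_carrier[OF D]
    by (intro eq_matI) (auto simp: index_mat_adjoint[OF D] index_mat_adjoint[OF U(1)])
  then have "v - mat_adjoint U *\<^sub>v v = 0\<^sub>v n"
    using v minus_mult_distrib_mat_vec[OF one_carrier_mat U' v(1)] by simp
  then have "mat_adjoint U *\<^sub>v v = v"
    using v U' by (intro eq_vecI) (auto simp: vec_eq_iff)
  then have "U *\<^sub>v v = (U * mat_adjoint U) *\<^sub>v v"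
    using U U' v by (metis assoc_mult_mat_vec)
  then have "U *\<^sub>v v = v" using U(2) v by simp
  then show ?thesis
    using v minus_mult_distrib_mat_vec[OF one_carrier_mat U(1) v(1)] by simp
qed

section \<open>Derivative of a determinant\<close>

lemma det_replace_row_expansion:
  fixes B C :: "'a::comm_ring_1 mat"
  assumes B: "B \<in> carrier_mat n n" and C: "C \<in> carrier_mat n n" and i: "i < n"
  shows "(\<Sum>p\<in>{p. p permutes {0..<n}}. signof p * (C $$ (i, p i) * (\<Prod>j\<in>{0..<n}-{i}. B $$ (j, p j))))
     = (\<Sum>j<n. C $$ (i,j) * cofactor B i j)"
proof -
  define R where "R = mat n n (\<lambda>(a,b). if a = i then C $$ (a,b) else B $$ (a,b))"
  have R: "R \<in> carrier_mat n n" by (simp add: R_def)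
  have "(\<Sum>p\<in>{p. p permutes {0..<n}}. signof p * (C $$ (i, p i) * (\<Prod>j\<in>{0..<n}-{i}. B $$ (j, p j))))
      = (\<Sum>p\<in>{p. p permutes {0..<n}}. signof p * (\<Prod>a = 0..<n. R $$ (a, p a)))"
  proof (rule sum.cong[OF refl])
    fix p assume "p \<in> {p. p permutes {0..<n}}"
    then have p: "\<And>a. a < n \<Longrightarrow> p a < n" by (simp add: permutes_in_image)
    have "(\<Prod>a = 0..<n. R $$ (a, p a)) = R $$ (i, p i) * (\<Prod>a\<in>{0..<n}-{i}. R $$ (a, p a))"
      by (rule prod.remove) (use i in auto)
    also have "\<dots> = C $$ (i, p i) * (\<Prod>a\<in>{0..<n}-{i}. B $$ (a, p a))"
      using i p by (auto simp: R_def intro!: prod.cong)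
    finally show "signof p * (C $$ (i, p i) * (\<Prod>j\<in>{0..<n}-{i}. B $$ (j, p j)))
        = signof p * (\<Prod>a = 0..<n. R $$ (a, p a))" by simp
  qed
  also have "\<dots> = det R" by (rule det_def'[OF R, symmetric])
  also have "\<dots> = (\<Sum>j<n. R $$ (i,j) * cofactor R i j)" by (rule laplace_expansion_row[OF R i])
  also have "\<dots> = (\<Sum>j<n. C $$ (i,j) * cofactor B i j)"
  proof (rule sum.cong[OF refl])
    fix j assume "j \<in> {..<n}"
    moreover have "mat_delete R i j = mat_delete B i j"
      using B i by (intro eq_matI) (auto simp: mat_delete_def R_def)
    ultimately show "R $$ (i,j) * cofactor R i j = C $$ (i,j) * cofactor B i j"
      using i by (simp add: cofactor_def R_def)
  qed
  finally show ?thesis .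
qed

lemma det_affine_has_field_derivative:
  fixes B C :: "'a::real_normed_field mat"
  assumes B: "B \<in> carrier_mat n n" and C: "C \<in> carrier_mat n n"
  shows "((\<lambda>w. det (B + (w - w0) \<cdot>\<^sub>m C)) has_field_derivative
           (\<Sum>i<n. \<Sum>j<n. C $$ (i,j) * cofactor B i j)) (at w0)"
proof -
  let ?P = "{p. p permutes {0..<n}}"
  have "det (B + (w - w0) \<cdot>\<^sub>m C)
      = (\<Sum>p\<in>?P. signof p * (\<Prod>i\<in>{0..<n}. B $$ (i,p i) + (w - w0) * C $$ (i,p i)))" for w
    using B C by (subst det_def'[of _ n]) (auto intro!: sum.cong prod.cong simp: permutes_in_image)
  moreover have "((\<lambda>w. \<Sum>p\<in>?P. signof p * (\<Prod>i\<in>{0..<n}. B $$ (i,p i) + (w - w0) * C $$ (i,p i)))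
      has_field_derivative (\<Sum>p\<in>?P. signof p * (\<Sum>i\<in>{0..<n}. C $$ (i, p i) *
        (\<Prod>j\<in>{0..<n}-{i}. B $$ (j,p j) + (w0 - w0) * C $$ (j,p j))))) (at w0)"
    by (intro DERIV_sum DERIV_cmult has_field_derivative_prod) (auto intro!: derivative_eq_intros)
  moreover have "(\<Sum>p\<in>?P. signof p * (\<Sum>i\<in>{0..<n}. C $$ (i, p i) *
        (\<Prod>j\<in>{0..<n}-{i}. B $$ (j,p j) + (w0 - w0) * C $$ (j,p j))))
      = (\<Sum>i\<in>{0..<n}. \<Sum>p\<in>?P. signof p * (C $$ (i, p i) * (\<Prod>j\<in>{0..<n}-{i}. B $$ (j,p j))))"
    by (simp add: sum_distrib_left sum.swap[of _ ?P])
  moreover have "\<dots> = (\<Sum>i<n. \<Sum>j<n. C $$ (i,j) * cofactor B i j)"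
    by (simp add: det_replace_row_expansion[OF B C] lessThan_atLeast0)
  ultimately show ?thesis by simp
qed

section \<open>The bond scattering matrix\<close>

lemma bond_edge_less: "b < 2*N \<Longrightarrow> bond_edge N b < N"
  by (auto simp: bond_edge_def)

lemma bond_rev_less: "b < 2*N \<Longrightarrow> bond_rev N b < 2*N"
  by (auto simp: bond_rev_def)

lemma bond_rev_bond_rev: "b < 2*N \<Longrightarrow> bond_rev N (bond_rev N b) = b"
  by (auto simp: bond_rev_def)

lemma bond_rev_eq_iff: "b < 2*N \<Longrightarrow> c < 2*N \<Longrightarrow> b = bond_rev N c \<longleftrightarrow> c = bond_rev N b"
  using bond_rev_bond_rev by metis

lemma bond_start_bond_rev: "b < 2*N \<Longrightarrow> bond_start orig tgt N (bond_rev N b) = bond_end orig tgt N b"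
  by (auto simp: bond_rev_def bond_start_def bond_end_def)

lemma bond_end_bond_rev: "b < 2*N \<Longrightarrow> bond_end orig tgt N (bond_rev N b) = bond_start orig tgt N b"
  by (auto simp: bond_rev_def bond_start_def bond_end_def)

definition outgoing_bonds :: "(nat \<Rightarrow> 'v) \<Rightarrow> (nat \<Rightarrow> 'v) \<Rightarrow> nat \<Rightarrow> 'v \<Rightarrow> nat set" where
  "outgoing_bonds orig tgt N v = {b. b < 2*N \<and> bond_start orig tgt N b = v}"

definition incoming_bonds :: "(nat \<Rightarrow> 'v) \<Rightarrow> (nat \<Rightarrow> 'v) \<Rightarrow> nat \<Rightarrow> 'v \<Rightarrow> nat set" where
  "incoming_bonds orig tgt N v = {c. c < 2*N \<and> bond_end orig tgt N c = v}"

lemma finite_incoming_bonds: "finite (incoming_bonds orig tgt N v)"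
  by (simp add: incoming_bonds_def)

lemma bond_rev_in_incoming_bonds:
  "b < 2*N \<Longrightarrow> bond_rev N b \<in> incoming_bonds orig tgt N (bond_start orig tgt N b)"
  by (simp add: incoming_bonds_def bond_rev_less bond_end_bond_rev)

lemma incoming_bonds_eq_image:
  "incoming_bonds orig tgt N v = bond_rev N ` outgoing_bonds orig tgt N v"
proof
  show "incoming_bonds orig tgt N v \<subseteq> bond_rev N ` outgoing_bonds orig tgt N v"
  proof
    fix c assume "c \<in> incoming_bonds orig tgt N v"
    then have "bond_rev N c \<in> outgoing_bonds orig tgt N v" "c = bond_rev N (bond_rev N c)"
      by (auto simp: incoming_bonds_def outgoing_bonds_def bond_rev_less bond_start_bond_rev
          bond_rev_bond_rev)
    then show "c \<in> bond_rev N ` outgoing_bonds orig tgt N v" by blast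
  qed
qed (auto simp: incoming_bonds_def outgoing_bonds_def bond_rev_less bond_end_bond_rev)

lemma inj_on_bond_rev: "inj_on (bond_rev N) (outgoing_bonds orig tgt N v)"
proof (rule inj_onI)
  fix a b assume "a \<in> outgoing_bonds orig tgt N v" "b \<in> outgoing_bonds orig tgt N v"
    and "bond_rev N a = bond_rev N b"
  then show "a = b" unfolding outgoing_bonds_def using bond_rev_bond_rev by (metis mem_Collect_eq)
qed

lemma card_incoming_bonds: "card (incoming_bonds orig tgt N v) = vdeg orig tgt N v"
  unfolding incoming_bonds_eq_image card_image[OF inj_on_bond_rev]
  by (simp add: outgoing_bonds_def vdeg_def)

lemma sum_incoming_bonds:
  "(\<Sum>c\<in>incoming_bonds orig tgt N v. g c) = (\<Sum>b\<in>outgoing_bonds orig tgt N v. g (bond_rev N b))"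
  unfolding incoming_bonds_eq_image by (simp add: sum.reindex[OF inj_on_bond_rev])

lemma vdeg_bond_start_pos: "b < 2*N \<Longrightarrow> 0 < vdeg orig tgt N (bond_start orig tgt N b)"
  using bond_rev_in_incoming_bonds[of b N orig tgt]
  by (auto simp: card_incoming_bonds[symmetric] card_gt_0_iff finite_incoming_bonds)

lemma scat_index:
  assumes "b < 2*N" "c < 2*N"
  shows "scat orig tgt N $$ (b,c) =
    (if c \<in> incoming_bonds orig tgt N (bond_start orig tgt N b)
     then 2 / of_nat (vdeg orig tgt N (bond_start orig tgt N b)) - (if c = bond_rev N b then 1 else 0)
     else 0)"
  using assms bond_rev_eq_iff[OF assms] by (simp add: scat_def incoming_bonds_def)

lemma cnj_scat: "b < 2*N \<Longrightarrow> c < 2*N \<Longrightarrow> cnj (scat orig tgt N $$ (b,c)) = scat orig tgt N $$ (b,c)"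
  by (simp add: scat_def)

lemma sum_scat_row:
  fixes orig tgt :: "nat \<Rightarrow> 'v"
  assumes b: "b < 2*N"
  defines "v \<equiv> bond_start orig tgt N b"
  shows "(\<Sum>c<2*N. scat orig tgt N $$ (b,c) * g c)
    = 2 / of_nat (vdeg orig tgt N v) * (\<Sum>c\<in>incoming_bonds orig tgt N v. g c) - g (bond_rev N b)"
proof -
  have "(\<Sum>c<2*N. scat orig tgt N $$ (b,c) * g c) = (\<Sum>c\<in>incoming_bonds orig tgt N v. scat orig tgt N $$ (b,c) * g c)"
    using b by (intro sum.mono_neutral_right) (auto simp: scat_index v_def incoming_bonds_def)
  also have "\<dots> = (\<Sum>c\<in>incoming_bonds orig tgt N v. 2 / of_nat (vdeg orig tgt N v) * g c
      - (if c = bond_rev N b then g c else 0))"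
    using b by (intro sum.cong) (auto simp: scat_index v_def incoming_bonds_def algebra_simps)
  also have "\<dots> = 2 / of_nat (vdeg orig tgt N v) * (\<Sum>c\<in>incoming_bonds orig tgt N v. g c) - g (bond_rev N b)"
    using bond_rev_in_incoming_bonds[OF b, of orig tgt] finite_incoming_bonds[of orig tgt N v]
    by (simp add: sum_subtractf sum_distrib_left v_def)
  finally show ?thesis .
qed

lemma scat_orthogonal:
  assumes i: "i < 2*N" and j: "j < 2*N"
  shows "(\<Sum>k<2*N. scat orig tgt N $$ (i,k) * scat orig tgt N $$ (j,k)) = (if i = j then 1 else 0)"
proof (cases "bond_start orig tgt N i = bond_start orig tgt N j")
  case True
  define v where "v = bond_start orig tgt N j"
  define d where "d = vdeg orig tgt N v"
  have d: "d > 0" using vdeg_bond_start_pos[OF j] by (simp add: d_def v_def)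
  have "(\<Sum>k\<in>incoming_bonds orig tgt N v. scat orig tgt N $$ (j,k))
      = (\<Sum>k\<in>incoming_bonds orig tgt N v. 2 / of_nat d - (if k = bond_rev N j then 1 else 0))"
    by (intro sum.cong) (auto simp: scat_index j v_def d_def incoming_bonds_def)
  also have "\<dots> = 1"
    using d bond_rev_in_incoming_bonds[OF j, of orig tgt] finite_incoming_bonds[of orig tgt N v]
    by (simp add: sum_subtractf card_incoming_bonds d_def v_def)
  finally have row_sum: "(\<Sum>k\<in>incoming_bonds orig tgt N v. scat orig tgt N $$ (j,k)) = 1" .
  have "bond_rev N i = bond_rev N j \<longleftrightarrow> i = j"
    using i j bond_rev_bond_rev by metis
  then have "scat orig tgt N $$ (j, bond_rev N i) = 2 / of_nat d - (if i = j then 1 else 0)"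
    using i j True bond_rev_in_incoming_bonds[OF i, of orig tgt]
    by (simp add: scat_index bond_rev_less d_def v_def)
  then show ?thesis
    using True row_sum unfolding d_def v_def by (simp add: sum_scat_row[OF i])
next
  case False
  have "scat orig tgt N $$ (j,k) = 0" if "k \<in> incoming_bonds orig tgt N (bond_start orig tgt N i)" for k
    using that False j by (auto simp: scat_index incoming_bonds_def)
  moreover have "scat orig tgt N $$ (j, bond_rev N i) = 0"
    using False i j by (auto simp: scat_index incoming_bonds_def bond_rev_less bond_end_bond_rev)
  ultimately show ?thesis
    using False by (auto simp: sum_scat_row[OF i])
qed

lemma Umat_index:
  "b < 2*N \<Longrightarrow> c < 2*N \<Longrightarrow> Umat orig tgt N z $$ (b,c) = z (bond_edge N b) * scat orig tgt N $$ (b,c)"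
  by (simp add: Umat_def)

lemma Umat_carrier: "Umat orig tgt N z \<in> carrier_mat (2*N) (2*N)"
  by (simp add: Umat_def)

lemma Umat_mult_adjoint:
  assumes z: "z \<in> torus N"
  shows "Umat orig tgt N z * mat_adjoint (Umat orig tgt N z) = 1\<^sub>m (2*N)"
proof (rule eq_matI)
  fix i j assume "i < dim_row (1\<^sub>m (2*N) :: complex mat)" "j < dim_col (1\<^sub>m (2*N) :: complex mat)"
  then have i: "i < 2*N" and j: "j < 2*N" by auto
  let ?U = "Umat orig tgt N z" and ?S = "scat orig tgt N"
  have U: "?U \<in> carrier_mat (2*N) (2*N)" by (rule Umat_carrier)
  have "(?U * mat_adjoint ?U) $$ (i,j) = (\<Sum>k<2*N. ?U $$ (i,k) * cnj (?U $$ (j,k)))"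
    using i j U mat_adjoint_carrier[OF U]
    by (auto simp: scalar_prod_def index_mat_adjoint[OF U] lessThan_atLeast0 intro!: sum.cong)
  also have "\<dots> = z (bond_edge N i) * cnj (z (bond_edge N j)) * (\<Sum>k<2*N. ?S $$ (i,k) * ?S $$ (j,k))"
    using i j by (simp add: Umat_index cnj_scat sum_distrib_left mult_ac)
  also have "\<dots> = (if i = j then 1 else 0)"
    using z bond_edge_less[OF j] complex_norm_square[of "z (bond_edge N j)"]
    by (simp add: scat_orthogonal i j torus_def)
  finally show "(?U * mat_adjoint ?U) $$ (i,j) = 1\<^sub>m (2*N) $$ (i,j)" using i j by simp
qed (use Umat_carrier[of orig tgt N z] mat_adjoint_carrier[OF Umat_carrier[of orig tgt N z]] in auto)

section \<open>Partial derivatives of the secular polynomial\<close>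

abbreviation secular_mat :: "(nat \<Rightarrow> 'v) \<Rightarrow> (nat \<Rightarrow> 'v) \<Rightarrow> nat \<Rightarrow> (nat \<Rightarrow> complex) \<Rightarrow> complex mat" where
  "secular_mat orig tgt N z \<equiv> 1\<^sub>m (2*N) - Umat orig tgt N z"

lemma secular_mat_carrier: "secular_mat orig tgt N z \<in> carrier_mat (2*N) (2*N)"
  using minus_carrier_mat[OF Umat_carrier] .

lemma secular_mat_mult_vec_index:
  assumes q: "q \<in> carrier_vec (2*N)" and b: "b < 2*N"
  shows "(secular_mat orig tgt N z *\<^sub>v q) $ b
    = q $ b - z (bond_edge N b) * (\<Sum>c<2*N. scat orig tgt N $$ (b,c) * q $ c)"
proof -
  have "(secular_mat orig tgt N z *\<^sub>v q) $ b
      = (\<Sum>c<2*N. (if b = c then q $ c else 0) - z (bond_edge N b) * (scat orig tgt N $$ (b,c) * q $ c))"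
    using q b by (auto simp: Umat_def scalar_prod_def lessThan_atLeast0 algebra_simps intro!: sum.cong)
  also have "\<dots> = q $ b - z (bond_edge N b) * (\<Sum>c<2*N. scat orig tgt N $$ (b,c) * q $ c)"
    using b by (simp add: sum_subtractf sum_distrib_left)
  finally show ?thesis .
qed

lemma secular_mat_kernel_iff:
  assumes q: "q \<in> carrier_vec (2*N)"
  shows "secular_mat orig tgt N z *\<^sub>v q = 0\<^sub>v (2*N) \<longleftrightarrow>
    (\<forall>b<2*N. q $ b = z (bond_edge N b) * (\<Sum>c<2*N. scat orig tgt N $$ (b,c) * q $ c))"
proof -
  have "dim_row (Umat orig tgt N z) = 2*N" by (simp add: Umat_def)
  then show ?thesis
    by (simp add: vec_eq_iff secular_mat_mult_vec_index[OF q] del: index_mult_mat_vec)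
qed

definition Umat_pderiv :: "(nat \<Rightarrow> 'v) \<Rightarrow> (nat \<Rightarrow> 'v) \<Rightarrow> nat \<Rightarrow> nat \<Rightarrow> complex mat" where
  "Umat_pderiv orig tgt N e =
     mat (2*N) (2*N) (\<lambda>(b,c). if bond_edge N b = e then scat orig tgt N $$ (b,c) else 0)"

lemma pderiv_secular_poly:
  "pderiv_z (secular_poly orig tgt N) e z
    = - (\<Sum>i<2*N. \<Sum>j<2*N. Umat_pderiv orig tgt N e $$ (i,j) * cofactor (secular_mat orig tgt N z) i j)"
proof -
  let ?D = "Umat_pderiv orig tgt N e"
  have "secular_poly orig tgt N (z(e := w)) = det (secular_mat orig tgt N z + (w - z e) \<cdot>\<^sub>m - ?D)" for w
  proof -
    have "secular_mat orig tgt N (z(e := w)) = secular_mat orig tgt N z + (w - z e) \<cdot>\<^sub>m - ?D"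
      by (intro eq_matI) (auto simp: Umat_def Umat_pderiv_def algebra_simps)
    then show ?thesis by (simp add: secular_poly_def)
  qed
  then have "(\<lambda>w. secular_poly orig tgt N (z(e := w)))
      = (\<lambda>w. det (secular_mat orig tgt N z + (w - z e) \<cdot>\<^sub>m - ?D))" by (rule ext)
  moreover have "- ?D \<in> carrier_mat (2*N) (2*N)" by (simp add: Umat_pderiv_def)
  then have "deriv (\<lambda>w. det (secular_mat orig tgt N z + (w - z e) \<cdot>\<^sub>m - ?D)) (z e)
      = (\<Sum>i<2*N. \<Sum>j<2*N. (- ?D) $$ (i,j) * cofactor (secular_mat orig tgt N z) i j)"
    by (intro DERIV_imp_deriv det_affine_has_field_derivative secular_mat_carrier)
  ultimately have "pderiv_z (secular_poly orig tgt N) e z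
      = (\<Sum>i<2*N. \<Sum>j<2*N. (- ?D) $$ (i,j) * cofactor (secular_mat orig tgt N z) i j)"
    unfolding pderiv_z_def by simp
  then show ?thesis by (simp add: Umat_pderiv_def sum_negf)
qed

lemma pderiv_secular_poly_eq_0_if_adj_mat_eq_0:
  assumes "adj_mat (secular_mat orig tgt N z) = 0\<^sub>m (2*N) (2*N)"
  shows "pderiv_z (secular_poly orig tgt N) e z = 0"
proof -
  have "cofactor (secular_mat orig tgt N z) i j = 0" if "i < 2*N" "j < 2*N" for i j
    using arg_cong[OF assms, of "\<lambda>X. X $$ (j,i)"] that by (simp add: adj_mat_def Umat_def)
  then show ?thesis by (simp add: pderiv_secular_poly)
qed

lemma pderiv_secular_poly_rank_one:
  assumes adj: "adj_mat (secular_mat orig tgt N z) = \<gamma> \<cdot>\<^sub>m outer_mat q"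
    and q: "q \<in> carrier_vec (2*N)" "secular_mat orig tgt N z *\<^sub>v q = 0\<^sub>v (2*N)"
  shows "z e * pderiv_z (secular_poly orig tgt N) e z
    = - \<gamma> * (\<Sum>b\<in>{b. b < 2*N \<and> bond_edge N b = e}. q $ b * cnj (q $ b))"
proof -
  let ?S = "scat orig tgt N"
  have kernel: "\<forall>b<2*N. q $ b = z (bond_edge N b) * (\<Sum>c<2*N. ?S $$ (b,c) * q $ c)"
    using secular_mat_kernel_iff[OF q(1)] q(2) by blast
  have "cofactor (secular_mat orig tgt N z) b c = \<gamma> * (q $ c * cnj (q $ b))" if "b < 2*N" "c < 2*N" for b c
    using arg_cong[OF adj, of "\<lambda>X. X $$ (c,b)"] that q by (simp add: adj_mat_def Umat_def outer_mat_def)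
  then have "pderiv_z (secular_poly orig tgt N) e z
      = - (\<Sum>b<2*N. if bond_edge N b = e then \<gamma> * cnj (q $ b) * (\<Sum>c<2*N. ?S $$ (b,c) * q $ c) else 0)"
    unfolding pderiv_secular_poly
    by (intro arg_cong[where f = uminus] sum.cong refl) (auto simp: Umat_pderiv_def sum_distrib_left mult_ac)
  \<comment> \<open>multiplying by \<open>z\<^sub>e\<close> turns each row sum back into \<open>q\<^sub>b\<close> by the kernel equation\<close>
  then have "z e * pderiv_z (secular_poly orig tgt N) e z
      = - (\<Sum>b<2*N. z e * (if bond_edge N b = e
            then \<gamma> * cnj (q $ b) * (\<Sum>c<2*N. ?S $$ (b,c) * q $ c) else 0))"
    by (simp add: sum_distrib_left)
  also have "\<dots> = - (\<Sum>b<2*N. if bond_edge N b = e then \<gamma> * (q $ b * cnj (q $ b)) else 0)"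
  proof (intro arg_cong[where f = uminus] sum.cong refl)
    fix b assume "b \<in> {..<2*N}"
    then have "q $ b = z (bond_edge N b) * (\<Sum>c<2*N. ?S $$ (b,c) * q $ c)"
      using kernel by blast
    then show "z e * (if bond_edge N b = e then \<gamma> * cnj (q $ b) * (\<Sum>c<2*N. ?S $$ (b,c) * q $ c) else 0)
        = (if bond_edge N b = e then \<gamma> * (q $ b * cnj (q $ b)) else 0)"
      by (cases "bond_edge N b = e") (simp_all add: ac_simps)
  qed
  finally show ?thesis
    by (simp add: sum.If_cases sum_distrib_left lessThan_def Collect_conj_eq Int_commute sum_negf)
qed

lemma pderiv_secular_poly_neq_0_if_rank_one:
  assumes adj: "adj_mat (secular_mat orig tgt N z) = \<gamma> \<cdot>\<^sub>m outer_mat q" and "\<gamma> \<noteq> 0"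
    and q: "q \<in> carrier_vec (2*N)" "q \<noteq> 0\<^sub>v (2*N)" "secular_mat orig tgt N z *\<^sub>v q = 0\<^sub>v (2*N)"
  shows "\<exists>e<N. pderiv_z (secular_poly orig tgt N) e z \<noteq> 0"
proof -
  obtain b0 where b0: "b0 < 2*N" "q $ b0 \<noteq> 0"
    using q by (metis carrier_vecD eq_vecI index_zero_vec)
  define e where "e = bond_edge N b0"
  let ?B = "{b. b < 2*N \<and> bond_edge N b = e}"
  have "(\<Sum>b\<in>?B. q $ b * cnj (q $ b)) = of_real (\<Sum>b\<in>?B. (cmod (q $ b))\<^sup>2)"
    unfolding of_real_sum by (intro sum.cong refl) (rule complex_norm_square[symmetric])
  moreover have "(cmod (q $ b0))\<^sup>2 \<le> (\<Sum>b\<in>?B. (cmod (q $ b))\<^sup>2)"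
    by (rule member_le_sum) (use b0 e_def in auto)
  then have "(\<Sum>b\<in>?B. (cmod (q $ b))\<^sup>2) > 0"
    using b0 by (smt (verit) zero_less_power2 norm_eq_zero)
  ultimately have "(\<Sum>b\<in>?B. q $ b * cnj (q $ b)) \<noteq> 0" by (metis of_real_eq_0_iff less_irrefl)
  then have "z e * pderiv_z (secular_poly orig tgt N) e z \<noteq> 0"
    using pderiv_secular_poly_rank_one[OF adj q(1,3)] \<open>\<gamma> \<noteq> 0\<close> by simp
  then show ?thesis using bond_edge_less[OF b0(1)] e_def by auto
qed

lemma adj_secular_mat_zero_or_rank_one:
  assumes z: "z \<in> torus N" and P: "secular_poly orig tgt N z = 0"
    and q: "q \<in> carrier_vec (2*N)" "q \<noteq> 0\<^sub>v (2*N)" "secular_mat orig tgt N z *\<^sub>v q = 0\<^sub>v (2*N)"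
  shows "adj_mat (secular_mat orig tgt N z) = 0\<^sub>m (2*N) (2*N) \<or>
    (\<exists>\<gamma>. \<gamma> \<noteq> 0 \<and> adj_mat (secular_mat orig tgt N z) = \<gamma> \<cdot>\<^sub>m outer_mat q)"
proof (rule adj_mat_zero_or_rank_one[OF secular_mat_carrier _ _ q])
  show "det (secular_mat orig tgt N z) = 0" using P by (simp add: secular_poly_def)
  show "secular_mat orig tgt N z *\<^sub>v v = 0\<^sub>v (2*N)"
    if "v \<in> carrier_vec (2*N)" "mat_adjoint (secular_mat orig tgt N z) *\<^sub>v v = 0\<^sub>v (2*N)" for v
    using kernel_adjoint_one_minus_unitary[OF Umat_carrier Umat_mult_adjoint[OF z] that] .
qed

lemma adj_secular_mat_sing:
  assumes "z \<in> sigma_sing orig tgt N"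
  shows "adj_mat (secular_mat orig tgt N z) = 0\<^sub>m (2*N) (2*N)"
proof -
  have z: "z \<in> torus N" and P: "secular_poly orig tgt N z = 0"
    and dP: "\<forall>e<N. pderiv_z (secular_poly orig tgt N) e z = 0"
    using assms by (auto simp: sigma_sing_def)
  obtain q where q: "q \<in> carrier_vec (2*N)" "q \<noteq> 0\<^sub>v (2*N)" "secular_mat orig tgt N z *\<^sub>v q = 0\<^sub>v (2*N)"
    using det_0_iff_vec_prod_zero[OF secular_mat_carrier] P unfolding secular_poly_def by blast
  show ?thesis
    using adj_secular_mat_zero_or_rank_one[OF z P q] pderiv_secular_poly_neq_0_if_rank_one[OF _ _ q] dP
    by blast
qed

lemma adj_secular_mat_reg:
  assumes "z \<in> sigma_reg orig tgt N"
    and q: "q \<in> carrier_vec (2*N)" "q \<noteq> 0\<^sub>v (2*N)" "secular_mat orig tgt N z *\<^sub>v q = 0\<^sub>v (2*N)"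
  obtains \<gamma> where "\<gamma> \<noteq> 0" "adj_mat (secular_mat orig tgt N z) = \<gamma> \<cdot>\<^sub>m outer_mat q"
proof -
  have z: "z \<in> torus N" and P: "secular_poly orig tgt N z = 0"
    and dP: "\<exists>e<N. pderiv_z (secular_poly orig tgt N) e z \<noteq> 0"
    using assms by (auto simp: sigma_reg_def)
  then show ?thesis
    using adj_secular_mat_zero_or_rank_one[OF z P q] pderiv_secular_poly_eq_0_if_adj_mat_eq_0 that
    by blast
qed

section \<open>Traces of eigenfunctions\<close>

lemma ode_first_integral:
  fixes F D :: "real \<Rightarrow> complex" and s t :: complex
  assumes ode: "\<forall>x\<in>{0..L}. (F has_vector_derivative D x) (at x within {0..L}) \<and>
      (D has_vector_derivative (- complex_of_real (k^2) * F x)) (at x within {0..L})"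
    and st: "s * t = -1" "s = t * complex_of_real (k^2)" and L: "0 \<le> L"
  shows "exp (s * of_real L) * (F L + t * D L) = F 0 + t * D 0"
proof -
  define G where "G x = exp (s * of_real x) * (F x + t * D x)" for x
  have "(G has_vector_derivative 0) (at x within {0..L})" if x: "x \<in> {0..L}" for x
  proof -
    have "((\<lambda>x. exp (s * of_real x)) has_vector_derivative s * exp (s * of_real x)) (at x within {0..L})"
      by (rule has_vector_derivative_real_field) (auto intro!: derivative_eq_intros)
    moreover have "((\<lambda>x. F x + t * D x) has_vector_derivative D x + t * (- complex_of_real (k^2) * F x))
        (at x within {0..L})"
      using ode x by (intro has_vector_derivative_add has_vector_derivative_mult_right) auto
    ultimately have "(G has_vector_derivative exp (s * of_real x) * (D x + t * (- complex_of_real (k^2) * F x))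
        + s * exp (s * of_real x) * (F x + t * D x)) (at x within {0..L})"
      unfolding G_def by (rule has_vector_derivative_mult)
    moreover have "exp (s * of_real x) * (D x + t * (- complex_of_real (k^2) * F x))
        + s * exp (s * of_real x) * (F x + t * D x)
        = exp (s * of_real x) * ((1 + s * t) * D x + (s - t * complex_of_real (k^2)) * F x)"
      by (simp add: algebra_simps)
    ultimately show ?thesis using st by simp
  qed
  then obtain c where "\<And>x. x \<in> {0..L} \<Longrightarrow> G x = c"
    using has_vector_derivative_zero_constant[of "{0..L}" G] by auto
  then have "G L = G 0" using L by simp
  then show ?thesis by (simp add: G_def)
qed

lemma plane_wave_transfer:
  fixes F D :: "real \<Rightarrow> complex"
  assumes ode: "\<forall>x\<in>{0..L}. (F has_vector_derivative D x) (at x within {0..L}) \<and>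
      (D has_vector_derivative (- complex_of_real (k^2) * F x)) (at x within {0..L})"
    and k: "k > 0" and L: "0 \<le> L"
  shows "exp (\<i> * of_real (k * L)) * (F 0 - \<i> * (D 0 / of_real k)) = F L - \<i> * (D L / of_real k)"
    and "exp (\<i> * of_real (k * L)) * (F L + \<i> * (D L / of_real k)) = F 0 + \<i> * (D 0 / of_real k)"
proof -
  have "exp ((- \<i> * of_real k) * of_real L) * (F L + (- \<i> / of_real k) * D L) = F 0 + (- \<i> / of_real k) * D 0"
    by (rule ode_first_integral[OF ode _ _ L]) (use k in \<open>simp_all add: power2_eq_square\<close>)
  then have reflected: "exp ((- \<i> * of_real k) * of_real L) * (F L - \<i> * (D L / of_real k)) = F 0 - \<i> * (D 0 / of_real k)"
    by simp
  have "exp (\<i> * of_real (k * L)) * exp ((- \<i> * of_real k) * of_real L) = 1"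
    by (simp add: exp_add[symmetric] algebra_simps)
  then have "F L - \<i> * (D L / of_real k)
      = exp (\<i> * of_real (k * L)) * (exp ((- \<i> * of_real k) * of_real L) * (F L - \<i> * (D L / of_real k)))"
    by (simp only: mult.assoc[symmetric] mult_1)
  then show "exp (\<i> * of_real (k * L)) * (F 0 - \<i> * (D 0 / of_real k)) = F L - \<i> * (D L / of_real k)"
    by (simp only: reflected)
  have "exp ((\<i> * of_real k) * of_real L) * (F L + (\<i> / of_real k) * D L) = F 0 + (\<i> / of_real k) * D 0"
    by (rule ode_first_integral[OF ode _ _ L]) (use k in \<open>simp_all add: power2_eq_square\<close>)
  then show "exp (\<i> * of_real (k * L)) * (F L + \<i> * (D L / of_real k)) = F 0 + \<i> * (D 0 / of_real k)"
    by (simp add: mult.assoc)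
qed

text \<open>On an edge, \<open>f x = a e\<^sup>i\<^sup>k\<^sup>x + b e\<^sup>-\<^sup>i\<^sup>k\<^sup>x\<close>; the amplitude of bond \<open>c\<close> is the coefficient
  of the wave travelling along \<open>c\<close>, measured where \<open>c\<close> ends.\<close>

definition bond_amplitudes :: "nat \<Rightarrow> (nat \<Rightarrow> real) \<Rightarrow> real \<Rightarrow> (nat \<Rightarrow> real \<Rightarrow> complex)
    \<Rightarrow> (nat \<Rightarrow> real \<Rightarrow> complex) \<Rightarrow> complex vec" where
  "bond_amplitudes N l k f df = vec (2*N) (\<lambda>c.
     (bond_val N l f (bond_rev N c) + \<i> * (bond_outder N l df (bond_rev N c) / of_real k)) / 2)"

lemma bond_amplitudes_bond_rev:
  "b < 2*N \<Longrightarrow> bond_amplitudes N l k f df $ bond_rev N b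
     = (bond_val N l f b + \<i> * (bond_outder N l df b / of_real k)) / 2"
  by (simp add: bond_amplitudes_def bond_rev_less bond_rev_bond_rev)

lemma scat_mult_bond_amplitudes:
  assumes eig: "is_eigenpair orig tgt N l k f df" and b: "b < 2*N"
  shows "(\<Sum>c<2*N. scat orig tgt N $$ (b,c) * bond_amplitudes N l k f df $ c)
    = (bond_val N l f b - \<i> * (bond_outder N l df b / of_real k)) / 2"
proof -
  define v where "v = bond_start orig tgt N b"
  define d where "d = vdeg orig tgt N v"
  let ?w = "bond_amplitudes N l k f df" and ?O = "outgoing_bonds orig tgt N v"
    and ?S = "scat orig tgt N"
  have continuity: "bond_val N l f a = bond_val N l f b" if "a \<in> ?O" for a
    using eig that b unfolding is_eigenpair_def outgoing_bonds_def v_def by blast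
  have kirchhoff: "(\<Sum>a\<in>?O. bond_outder N l df a) = 0"
    using eig unfolding is_eigenpair_def outgoing_bonds_def by blast
  have d: "of_nat d = (of_nat (card ?O) :: complex)" "d > 0"
    using vdeg_bond_start_pos[OF b] by (simp_all add: d_def v_def vdeg_def outgoing_bonds_def)
  have "(\<Sum>c\<in>incoming_bonds orig tgt N v. ?w $ c) = (\<Sum>a\<in>?O. ?w $ bond_rev N a)"
    by (rule sum_incoming_bonds)
  also have "\<dots> = (\<Sum>a\<in>?O. (bond_val N l f b + \<i> * (bond_outder N l df a / of_real k)) / 2)"
    by (intro sum.cong refl) (auto simp: bond_amplitudes_bond_rev continuity outgoing_bonds_def)
  also have "\<dots> = of_nat d * bond_val N l f b / 2"
    using kirchhoff d(1)
    by (simp add: sum.distrib sum_divide_distrib[symmetric] sum_distrib_left[symmetric])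
  finally have "(\<Sum>c\<in>incoming_bonds orig tgt N v. ?w $ c) = of_nat d * bond_val N l f b / 2" .
  moreover have "(\<Sum>c<2*N. ?S $$ (b,c) * ?w $ c)
      = 2 / of_nat d * (\<Sum>c\<in>incoming_bonds orig tgt N v. ?w $ c) - ?w $ bond_rev N b"
    unfolding sum_scat_row[OF b] d_def v_def ..
  ultimately show ?thesis
    using d(2) by (simp add: bond_amplitudes_bond_rev[OF b] field_simps)
qed

lemma bond_amplitudes_transfer:
  assumes eig: "is_eigenpair orig tgt N l k f df" and l: "\<forall>e<N. l e > 0" and k: "k > 0"
    and z: "\<forall>e<N. z e = exp (\<i> * of_real (k * l e))" and c: "c < 2*N"
  shows "z (bond_edge N c) * ((bond_val N l f c - \<i> * (bond_outder N l df c / of_real k)) / 2)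
    = bond_amplitudes N l k f df $ c"
proof -
  have transfer: "exp (\<i> * of_real (k * l e)) * (f e 0 - \<i> * (df e 0 / of_real k))
        = f e (l e) - \<i> * (df e (l e) / of_real k)"
      "exp (\<i> * of_real (k * l e)) * (f e (l e) + \<i> * (df e (l e) / of_real k))
        = f e 0 + \<i> * (df e 0 / of_real k)" if "e < N" for e
    using plane_wave_transfer[of "l e" "f e" "df e" k] eig l k that
    by (auto simp: is_eigenpair_def less_imp_le)
  show ?thesis
  proof (cases "c < N")
    case True
    then show ?thesis
      using transfer(1)[OF True] z c
      by (simp add: bond_amplitudes_def bond_edge_def bond_rev_def bond_val_def bond_outder_def)
  next
    case False
    then have "c - N < N" using c by simp
    then show ?thesis
      using transfer(2)[OF \<open>c - N < N\<close>] z c False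
      by (simp add: bond_amplitudes_def bond_edge_def bond_rev_def bond_val_def bond_outder_def)
  qed
qed

lemma Mmat_mult_vec_index:
  assumes w: "w \<in> carrier_vec (2*N)" and r: "r < 4*N"
  shows "(Mmat orig tgt N *\<^sub>v w) $ r = (if r < 2*N
      then (\<Sum>c<2*N. scat orig tgt N $$ (r,c) * w $ c) + (\<Sum>c<2*N. Jmat N $$ (r,c) * w $ c)
      else \<i> * ((\<Sum>c<2*N. scat orig tgt N $$ (r - 2*N, c) * w $ c)
                - (\<Sum>c<2*N. Jmat N $$ (r - 2*N, c) * w $ c)))"
proof -
  have "(Mmat orig tgt N *\<^sub>v w) $ r = (\<Sum>c<2*N. Mmat orig tgt N $$ (r,c) * w $ c)"
    using w r by (simp add: Mmat_def scalar_prod_def lessThan_atLeast0)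
  then show ?thesis
    using r by (simp add: Mmat_def sum.distrib sum_subtractf sum_distrib_left algebra_simps)
qed

lemma Jmat_mult_vec_sum:
  assumes b: "b < 2*N"
  shows "(\<Sum>c<2*N. Jmat N $$ (b,c) * w $ c) = w $ bond_rev N b"
proof -
  have "(\<Sum>c<2*N. Jmat N $$ (b,c) * w $ c) = (\<Sum>c<2*N. if c = bond_rev N b then w $ c else 0)"
    using b by (intro sum.cong) (auto simp: Jmat_def)
  then show ?thesis using bond_rev_less[OF b] by simp
qed

lemma Mmat_mult_bond_amplitudes:
  assumes eig: "is_eigenpair orig tgt N l k f df"
  shows "Mmat orig tgt N *\<^sub>v bond_amplitudes N l k f df = trace_vec N l k f df"
proof (rule eq_vecI)
  have w: "bond_amplitudes N l k f df \<in> carrier_vec (2*N)" by (simp add: bond_amplitudes_def)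
  fix r assume "r < dim_vec (trace_vec N l k f df)"
  then have r: "r < 4*N" by (simp add: trace_vec_def)
  show "(Mmat orig tgt N *\<^sub>v bond_amplitudes N l k f df) $ r = trace_vec N l k f df $ r"
  proof (cases "r < 2*N")
    case True
    then show ?thesis
      by (simp add: Mmat_mult_vec_index[OF w r] Jmat_mult_vec_sum scat_mult_bond_amplitudes[OF eig]
          bond_amplitudes_bond_rev trace_vec_def) (simp add: field_simps)
  next
    case False
    then have "r - 2*N < 2*N" using r by simp
    then show ?thesis
      using False r
      by (simp add: Mmat_mult_vec_index[OF w r] Jmat_mult_vec_sum scat_mult_bond_amplitudes[OF eig]
          bond_amplitudes_bond_rev trace_vec_def) (simp add: field_simps)
  qed
qed (simp add: Mmat_def trace_vec_def)

lemma trace_space_kernel: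
  assumes "(z, x) \<in> trace_space orig tgt N"
  obtains w where "w \<in> carrier_vec (2*N)" "Mmat orig tgt N *\<^sub>v w = x"
    "secular_mat orig tgt N z *\<^sub>v w = 0\<^sub>v (2*N)"
proof -
  obtain l k f df where l: "\<forall>e<N. l e > 0" and k: "k > 0" and eig: "is_eigenpair orig tgt N l k f df"
    and z: "\<forall>e<N. z e = exp (\<i> * of_real (k * l e))" and x: "x = trace_vec N l k f df"
    using assms unfolding trace_space_def by blast
  let ?w = "bond_amplitudes N l k f df"
  have w: "?w \<in> carrier_vec (2*N)" by (simp add: bond_amplitudes_def)
  have "\<forall>b<2*N. ?w $ b = z (bond_edge N b) * (\<Sum>c<2*N. scat orig tgt N $$ (b,c) * ?w $ c)"
    using bond_amplitudes_transfer[OF eig l k z] by (simp add: scat_mult_bond_amplitudes[OF eig])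
  then show ?thesis
    using that w Mmat_mult_bond_amplitudes[OF eig] x secular_mat_kernel_iff[OF w] by blast
qed

lemma trace_space_carrier: "(z, x) \<in> trace_space orig tgt N \<Longrightarrow> x \<in> carrier_vec (4*N)"
  by (auto simp: trace_space_def trace_vec_def)

section \<open>The matrix A(z)\<close>

lemma Mmat_carrier: "Mmat orig tgt N \<in> carrier_mat (4*N) (2*N)"
  by (simp add: Mmat_def)

lemma poly_mat_Amat: "poly_mat N (4*N) (4*N) (Amat orig tgt N)"
proof -
  have "poly_mat N (2*N) (2*N) (Umat orig tgt N)"
    by (rule poly_matI) (auto simp: Umat_def intro!: poly_fun_mult poly_fun_var poly_fun_const bond_edge_less)
  then have adj: "poly_mat N (2*N) (2*N) (\<lambda>z. adj_mat (secular_mat orig tgt N z))"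
    by (intro poly_mat_adj_mat poly_mat_diff poly_mat_const one_carrier_mat)
  have M: "poly_mat N (4*N) (2*N) (\<lambda>z. Mmat orig tgt N)"
    by (rule poly_mat_const[OF Mmat_carrier])
  have M': "poly_mat N (2*N) (4*N) (\<lambda>z. mat_adjoint (Mmat orig tgt N))"
    by (rule poly_mat_const[OF mat_adjoint_carrier[OF Mmat_carrier]])
  show ?thesis
    using poly_mat_mult[OF poly_mat_mult[OF M adj] M'] by (simp add: Amat_def[abs_def])
qed

lemma Amat_sing:
  assumes "z \<in> sigma_sing orig tgt N"
  shows "Amat orig tgt N z = 0\<^sub>m (4*N) (4*N)"
  using adj_secular_mat_sing[OF assms] Mmat_carrier[of orig tgt N]
    mat_adjoint_carrier[OF Mmat_carrier[of orig tgt N]]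
  by (simp add: Amat_def right_mult_zero_mat left_mult_zero_mat)

lemma Amat_reg:
  assumes z: "z \<in> sigma_reg orig tgt N" and x: "x \<noteq> 0\<^sub>v (4*N)" "(z, x) \<in> trace_space orig tgt N"
  obtains c where "c \<noteq> 0" "Amat orig tgt N z = c \<cdot>\<^sub>m outer_mat x"
proof -
  let ?M = "Mmat orig tgt N"
  obtain w where w: "w \<in> carrier_vec (2*N)" "?M *\<^sub>v w = x" "secular_mat orig tgt N z *\<^sub>v w = 0\<^sub>v (2*N)"
    using trace_space_kernel[OF x(2)] .
  have "?M *\<^sub>v 0\<^sub>v (2*N) = 0\<^sub>v (4*N)"
    using Mmat_carrier[of orig tgt N] by (intro eq_vecI) (auto simp: scalar_prod_def)
  then have "w \<noteq> 0\<^sub>v (2*N)"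
    using w(2) x(1) by blast
  then obtain \<gamma> where "\<gamma> \<noteq> 0" and adj: "adj_mat (secular_mat orig tgt N z) = \<gamma> \<cdot>\<^sub>m outer_mat w"
    using adj_secular_mat_reg[OF z w(1) _ w(3)] by blast
  have M: "?M \<in> carrier_mat (4*N) (2*N)" and M': "mat_adjoint ?M \<in> carrier_mat (2*N) (4*N)"
    and W: "outer_mat w \<in> carrier_mat (2*N) (2*N)"
    using Mmat_carrier mat_adjoint_carrier[OF Mmat_carrier] outer_mat_carrier[OF w(1)] by blast+
  have "Amat orig tgt N z = \<gamma> \<cdot>\<^sub>m (?M * outer_mat w * mat_adjoint ?M)"
    unfolding Amat_def adj mult_smult_distrib[OF M W]
    by (rule mult_smult_assoc_mat[OF mult_carrier_mat[OF M W] M'])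
  also have "\<dots> = \<gamma> \<cdot>\<^sub>m outer_mat x"
    using mult_outer_mat_mult_adjoint[OF M w(1)] w(2) by simp
  finally show ?thesis using \<open>\<gamma> \<noteq> 0\<close> that by blast
qed

theorem mainTheorem9:
  fixes orig tgt :: "nat \<Rightarrow> 'v" and N :: nat
  shows "(\<forall>i<4*N. \<forall>j<4*N. poly_fun N (\<lambda>z. Amat orig tgt N z $$ (i,j)))
    \<and> (\<forall>z\<in>sigma_sing orig tgt N. Amat orig tgt N z = 0\<^sub>m (4*N) (4*N))
    \<and> (\<forall>z\<in>sigma_reg orig tgt N. \<forall>x. x \<noteq> 0\<^sub>v (4*N) \<and> (z, x) \<in> trace_space orig tgt N \<longrightarrow>
         (\<exists>c. c \<noteq> 0 \<and> Amat orig tgt N z =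
            c \<cdot>\<^sub>m mat (4*N) (4*N) (\<lambda>(i,j). x $ i * cnj (x $ j))))"
proof (intro conjI ballI allI impI)
  show "poly_fun N (\<lambda>z. Amat orig tgt N z $$ (i,j))" if "i < 4*N" "j < 4*N" for i j
    using poly_matD(2)[OF poly_mat_Amat that] .
  show "Amat orig tgt N z = 0\<^sub>m (4*N) (4*N)" if "z \<in> sigma_sing orig tgt N" for z
    using Amat_sing[OF that] .
  fix z x assume "z \<in> sigma_reg orig tgt N" and x: "x \<noteq> 0\<^sub>v (4*N) \<and> (z, x) \<in> trace_space orig tgt N"
  then obtain c where "c \<noteq> 0" "Amat orig tgt N z = c \<cdot>\<^sub>m outer_mat x"
    using Amat_reg[of z orig tgt N x] by blast
  moreover have "x \<in> carrier_vec (4*N)" using trace_space_carrier x by blast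
  then have "outer_mat x = mat (4*N) (4*N) (\<lambda>(i,j). x $ i * cnj (x $ j))"
    by (simp add: outer_mat_def)
  ultimately show "\<exists>c. c \<noteq> 0 \<and> Amat orig tgt N z = c \<cdot>\<^sub>m mat (4*N) (4*N) (\<lambda>(i,j). x $ i * cnj (x $ j))"
    by auto
qed

end
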